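(* Let $\mathbb{K}$ be a field of characteristic $2$, let $(A,\cdot,\{-,-\},(-)^{\{2\}})$ be a restricted Poisson algebra, let $k\ge1$ and let $(A^t_k,\cdot,\mu_{(k)},\omega_{(k)})$ be a formal deformation of order $k$ of $A$, with $\mu_{(k)}=\{-,-\}+\sum_{i=1}^kt^i\mu_i$ and $\omega_{(k)}=(-)^{\{2\}}+\sum_{i=1}^kt^i\omega_i$. Define, for $x,y,z\in A$, $\mathrm{obs}^{(1)}_{k+1}(x,y,z)=\sum_{i=1}^k\big(\mu_i(x,\mu_{k+1-i}(y,z))+\mu_i(y,\mu_{k+1-i}(z,x))+\mu_i(z,\mu_{k+1-i}(x,y))\big)$ and $\mathrm{obs}^{(2)}_{k+1}(x,y)=\sum_{i=1}^k\big(\mu_i(y,\omega_{k+1-i}(x))+\mu_i(x,\mu_{k+1-i}(x,y))\big)$. Then $(\mathrm{obs}^{(1)}_{k+1},\mathrm{obs}^{(2)}_{k+1})\in C^3_{\rm PA}(A)$.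
   Context: $\mathbb{K}$ has characteristic $2$. Restricted Poisson algebra: commutative associative $(A,\cdot)$ with Lie bracket satisfying $\{ab,c\}=a\{b,c\}+b\{a,c\}$, and a map $(-)^{\{2\}}$ with $(\lambda x)^{\{2\}}=\lambda^2x^{\{2\}}$, $\mathrm{ad}_{x^{\{2\}}}=\mathrm{ad}_x^2$, $(x+y)^{\{2\}}=x^{\{2\}}+y^{\{2\}}+\{x,y\}$, $(xy)^{\{2\}}=x^2y^{\{2\}}+y^2x^{\{2\}}+xy\{x,y\}$. $\mathfrak{X}^n(A)$: alternating $n$-linear maps $A^n\to A$ that are derivations of $\cdot$ in each argument. For $n\ge2$, $C^n_{\rm PA}(A)$: pairs $(\varphi,\omega)$ with $\varphi\in\mathfrak{X}^n(A)$ and $\omega:A\times A^{n-2}\to A$ alternating multilinear in the last $n-2$ arguments, such that for $z=(z_2,..,z_{n-1})$: $\omega(\lambda x,z)=\lambda^2\omega(x,z)$, $\omega(x+y,z)=\omega(x,z)+\omega(y,z)+\varphi(x,y,z)$, $\omega(xy,z)=x^2\omega(y,z)+y^2\omega(x,z)+xy\varphi(x,y,z)$, $\omega(x,..,z_iz_i',..)=z_i\omega(x,..,z_i',..)+z_i'\omega(x,..,z_i,..)$. (For $n=2$, $\omega:A\to A$.) $\mathbb{K}^t_k=\mathbb{K}[t]/(t^{k+1})$, $A^t_k=A\otimes\mathbb{K}^t_k$. A formal deformation of order $k$: all $(\mu_i,\omega_i)\in C^2_{\rm PA}(A)$ and $(A^t_k,\mu_{(k)},\omega_{(k)})$ is a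 restricted Lie algebra over $\mathbb{K}^t_k$ ($\mu$ extended bilinearly, $\omega$ extended by $\omega(\lambda X)=\lambda^2\omega(X)$, $\omega(X+Y)=\omega(X)+\omega(Y)+\mu(X,Y)$). *)

theory Defs
  imports Main "HOL.Vector_Spaces"
begin

text \<open>The algebra A is a type 'a with a commutative associative multiplication
(class comm_ring, not necessarily unital) and a K-vector space structure given by
the scalar multiplication s, compatible with the multiplication.\<close>

definition comm_algebra :: "('k::field \<Rightarrow> 'a::comm_ring \<Rightarrow> 'a) \<Rightarrow> bool" where
  "comm_algebra s \<longleftrightarrow> vector_space s \<and> (\<forall>c x y. s c (x * y) = s c x * y)"

definition restricted_poisson ::
  "('k::field \<Rightarrow> 'a::comm_ring \<Rightarrow> 'a) \<Rightarrow> ('a \<Rightarrow> 'a \<Rightarrow> 'a) \<Rightarrow> ('a \<Rightarrow> 'a) \<Rightarrow> bool" where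
  "restricted_poisson s br sq \<longleftrightarrow>
     comm_algebra s \<and>
     \<comment> \<open>Lie bracket: bilinear, alternating, Jacobi\<close>
     (\<forall>c x y z. br (s c x + y) z = s c (br x z) + br y z) \<and>
     (\<forall>c x y z. br z (s c x + y) = s c (br z x) + br z y) \<and>
     (\<forall>x. br x x = 0) \<and>
     (\<forall>x y z. br x (br y z) + br y (br z x) + br z (br x y) = 0) \<and>
     \<comment> \<open>Leibniz rule\<close>
     (\<forall>a b c. br (a * b) c = a * br b c + b * br a c) \<and>
     \<comment> \<open>restriction map\<close>
     (\<forall>c x. sq (s c x) = s (c^2) (sq x)) \<and>
     (\<forall>x y. br (sq x) y = br x (br x y)) \<and>
     (\<forall>x y. sq (x + y) = sq x + sq y + br x y) \<and>
     (\<forall>x y. sq (x * y) = x * x * sq y + y * y * sq x + x * y * br x y)"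

definition C2_PA ::
  "('k::field \<Rightarrow> 'a::comm_ring \<Rightarrow> 'a) \<Rightarrow> ('a \<Rightarrow> 'a \<Rightarrow> 'a) \<Rightarrow> ('a \<Rightarrow> 'a) \<Rightarrow> bool" where
  "C2_PA s \<phi> \<omega> \<longleftrightarrow>
     \<comment> \<open>\<phi> \<in> X^2(A): alternating, multilinear, derivation in each argument\<close>
     (\<forall>c x y z. \<phi> (s c x + y) z = s c (\<phi> x z) + \<phi> y z) \<and>
     (\<forall>c x y z. \<phi> z (s c x + y) = s c (\<phi> z x) + \<phi> z y) \<and>
     (\<forall>x. \<phi> x x = 0) \<and>
     (\<forall>a b c. \<phi> (a * b) c = a * \<phi> b c + b * \<phi> a c) \<and>
     (\<forall>a b c. \<phi> c (a * b) = a * \<phi> c b + b * \<phi> c a) \<and>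
     \<comment> \<open>conditions on \<omega>\<close>
     (\<forall>c x. \<omega> (s c x) = s (c^2) (\<omega> x)) \<and>
     (\<forall>x y. \<omega> (x + y) = \<omega> x + \<omega> y + \<phi> x y) \<and>
     (\<forall>x y. \<omega> (x * y) = x * x * \<omega> y + y * y * \<omega> x + x * y * \<phi> x y)"

definition C3_PA ::
  "('k::field \<Rightarrow> 'a::comm_ring \<Rightarrow> 'a) \<Rightarrow> ('a \<Rightarrow> 'a \<Rightarrow> 'a \<Rightarrow> 'a) \<Rightarrow> ('a \<Rightarrow> 'a \<Rightarrow> 'a) \<Rightarrow> bool" where
  "C3_PA s \<phi> \<omega> \<longleftrightarrow>
     \<comment> \<open>\<phi> \<in> X^3(A): alternating, multilinear, derivation in each argument\<close>
     (\<forall>c x y u v. \<phi> (s c x + y) u v = s c (\<phi> x u v) + \<phi> y u v) \<and>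
     (\<forall>c x y u v. \<phi> u (s c x + y) v = s c (\<phi> u x v) + \<phi> u y v) \<and>
     (\<forall>c x y u v. \<phi> u v (s c x + y) = s c (\<phi> u v x) + \<phi> u v y) \<and>
     (\<forall>x y. \<phi> x x y = 0) \<and> (\<forall>x y. \<phi> x y x = 0) \<and> (\<forall>x y. \<phi> y x x = 0) \<and>
     (\<forall>a b u v. \<phi> (a * b) u v = a * \<phi> b u v + b * \<phi> a u v) \<and>
     (\<forall>a b u v. \<phi> u (a * b) v = a * \<phi> u b v + b * \<phi> u a v) \<and>
     (\<forall>a b u v. \<phi> u v (a * b) = a * \<phi> u v b + b * \<phi> u v a) \<and>
     \<comment> \<open>conditions on \<omega> : A \<times> A \<rightarrow> A (linear in the last argument)\<close>
     (\<forall>x c z z'. \<omega> x (s c z + z') = s c (\<omega> x z) + \<omega> x z') \<and>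
     (\<forall>c x z. \<omega> (s c x) z = s (c^2) (\<omega> x z)) \<and>
     (\<forall>x y z. \<omega> (x + y) z = \<omega> x z + \<omega> y z + \<phi> x y z) \<and>
     (\<forall>x y z. \<omega> (x * y) z = x * x * \<omega> y z + y * y * \<omega> x z + x * y * \<phi> x y z) \<and>
     (\<forall>x z z'. \<omega> x (z * z') = z * \<omega> x z' + z' * \<omega> x z)"

text \<open>An element of K^t_k = K[t]/(t^(k+1)) (resp. A^t_k = A \<otimes> K^t_k) is represented
by its coefficient sequence, vanishing beyond degree k.\<close>

definition Kt :: "nat \<Rightarrow> (nat \<Rightarrow> 'k::field) set" where
  "Kt k = {c. \<forall>n>k. c n = 0}"

definition At :: "nat \<Rightarrow> (nat \<Rightarrow> 'a::comm_ring) set" where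
  "At k = {X. \<forall>n>k. X n = 0}"

definition Kt_mult :: "nat \<Rightarrow> (nat \<Rightarrow> 'k::field) \<Rightarrow> (nat \<Rightarrow> 'k) \<Rightarrow> nat \<Rightarrow> 'k" where
  "Kt_mult k a b = (\<lambda>n. if n \<le> k then (\<Sum>j\<le>n. a j * b (n - j)) else 0)"

definition At_add :: "(nat \<Rightarrow> 'a::comm_ring) \<Rightarrow> (nat \<Rightarrow> 'a) \<Rightarrow> nat \<Rightarrow> 'a" where
  "At_add X Y = (\<lambda>n. X n + Y n)"

definition At_scale ::
  "('k::field \<Rightarrow> 'a::comm_ring \<Rightarrow> 'a) \<Rightarrow> nat \<Rightarrow> (nat \<Rightarrow> 'k) \<Rightarrow> (nat \<Rightarrow> 'a) \<Rightarrow> nat \<Rightarrow> 'a" where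
  "At_scale s k c X = (\<lambda>n. if n \<le> k then (\<Sum>j\<le>n. s (c j) (X (n - j))) else 0)"

definition coef_mu :: "('a \<Rightarrow> 'a \<Rightarrow> 'a) \<Rightarrow> (nat \<Rightarrow> 'a \<Rightarrow> 'a \<Rightarrow> 'a) \<Rightarrow> nat \<Rightarrow> 'a \<Rightarrow> 'a \<Rightarrow> 'a" where
  "coef_mu br mu i = (if i = 0 then br else mu i)"

definition coef_om :: "('a \<Rightarrow> 'a) \<Rightarrow> (nat \<Rightarrow> 'a \<Rightarrow> 'a) \<Rightarrow> nat \<Rightarrow> 'a \<Rightarrow> 'a" where
  "coef_om sq om i = (if i = 0 then sq else om i)"

text \<open>mu_(k) = br + sum_(i=1..k) t^i mu_i, extended K^t_k-bilinearly to A^t_k.\<close>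

definition mu_k ::
  "('a::comm_ring \<Rightarrow> 'a \<Rightarrow> 'a) \<Rightarrow> (nat \<Rightarrow> 'a \<Rightarrow> 'a \<Rightarrow> 'a) \<Rightarrow> nat \<Rightarrow>
   (nat \<Rightarrow> 'a) \<Rightarrow> (nat \<Rightarrow> 'a) \<Rightarrow> nat \<Rightarrow> 'a" where
  "mu_k br mu k X Y = (\<lambda>n. if n \<le> k then
      (\<Sum>i\<le>n. \<Sum>j\<le>n - i. coef_mu br mu i (X j) (Y (n - i - j))) else 0)"

text \<open>omega_(k) = sq + sum_(i=1..k) t^i omega_i on A, extended to A^t_k by
omega(lambda X) = lambda^2 omega(X), omega(X+Y) = omega(X)+omega(Y)+mu(X,Y); explicitly
omega(sum_j t^j x_j) = sum_j t^(2j) omega(x_j) + sum_(j<l) t^(j+l) mu(x_j,x_l).\<close>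

definition om_k ::
  "('a::comm_ring \<Rightarrow> 'a \<Rightarrow> 'a) \<Rightarrow> ('a \<Rightarrow> 'a) \<Rightarrow> (nat \<Rightarrow> 'a \<Rightarrow> 'a \<Rightarrow> 'a) \<Rightarrow> (nat \<Rightarrow> 'a \<Rightarrow> 'a) \<Rightarrow> nat \<Rightarrow>
   (nat \<Rightarrow> 'a) \<Rightarrow> nat \<Rightarrow> 'a" where
  "om_k br sq mu om k X = (\<lambda>n. if n \<le> k then
      (\<Sum>i\<le>n. \<Sum>j\<le>n. if i + 2 * j = n then coef_om sq om i (X j) else 0)
    + (\<Sum>i\<le>n. \<Sum>j\<le>n. \<Sum>l\<le>n. if i + j + l = n \<and> j < l then coef_mu br mu i (X j) (X l) else 0)
    else 0)"

definition restricted_Lie_Atk ::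
  "('k::field \<Rightarrow> 'a::comm_ring \<Rightarrow> 'a) \<Rightarrow> nat \<Rightarrow> ((nat \<Rightarrow> 'a) \<Rightarrow> (nat \<Rightarrow> 'a) \<Rightarrow> nat \<Rightarrow> 'a) \<Rightarrow>
   ((nat \<Rightarrow> 'a) \<Rightarrow> nat \<Rightarrow> 'a) \<Rightarrow> bool" where
  "restricted_Lie_Atk s k M W \<longleftrightarrow>
     (\<forall>c\<in>Kt k. \<forall>X\<in>At k. \<forall>Y\<in>At k. \<forall>Z\<in>At k.
        M (At_add (At_scale s k c X) Y) Z = At_add (At_scale s k c (M X Z)) (M Y Z) \<and>
        M Z (At_add (At_scale s k c X) Y) = At_add (At_scale s k c (M Z X)) (M Z Y)) \<and>
     (\<forall>X\<in>At k. M X X = (\<lambda>_. 0)) \<and>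
     (\<forall>X\<in>At k. \<forall>Y\<in>At k. \<forall>Z\<in>At k.
        At_add (At_add (M X (M Y Z)) (M Y (M Z X))) (M Z (M X Y)) = (\<lambda>_. 0)) \<and>
     (\<forall>c\<in>Kt k. \<forall>X\<in>At k. W (At_scale s k c X) = At_scale s k (Kt_mult k c c) (W X)) \<and>
     (\<forall>X\<in>At k. \<forall>Y\<in>At k. W (At_add X Y) = At_add (At_add (W X) (W Y)) (M X Y)) \<and>
     (\<forall>X\<in>At k. \<forall>Y\<in>At k. M (W X) Y = M X (M X Y))"

definition formal_deformation ::
  "('k::field \<Rightarrow> 'a::comm_ring \<Rightarrow> 'a) \<Rightarrow> ('a \<Rightarrow> 'a \<Rightarrow> 'a) \<Rightarrow> ('a \<Rightarrow> 'a) \<Rightarrow> nat \<Rightarrow>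
   (nat \<Rightarrow> 'a \<Rightarrow> 'a \<Rightarrow> 'a) \<Rightarrow> (nat \<Rightarrow> 'a \<Rightarrow> 'a) \<Rightarrow> bool" where
  "formal_deformation s br sq k mu om \<longleftrightarrow>
     (\<forall>i\<in>{1..k}. C2_PA s (mu i) (om i)) \<and>
     restricted_Lie_Atk s k (mu_k br mu k) (om_k br sq mu om k)"

definition obs1 :: "(nat \<Rightarrow> 'a::comm_ring \<Rightarrow> 'a \<Rightarrow> 'a) \<Rightarrow> nat \<Rightarrow> 'a \<Rightarrow> 'a \<Rightarrow> 'a \<Rightarrow> 'a" where
  "obs1 mu k x y z = (\<Sum>i\<in>{1..k}.
      mu i x (mu (k + 1 - i) y z) + mu i y (mu (k + 1 - i) z x) + mu i z (mu (k + 1 - i) x y))"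

definition obs2 :: "(nat \<Rightarrow> 'a::comm_ring \<Rightarrow> 'a \<Rightarrow> 'a) \<Rightarrow> (nat \<Rightarrow> 'a \<Rightarrow> 'a) \<Rightarrow> nat \<Rightarrow> 'a \<Rightarrow> 'a \<Rightarrow> 'a" where
  "obs2 mu om k x y = (\<Sum>i\<in>{1..k}. mu i y (om (k + 1 - i) x) + mu i x (mu (k + 1 - i) x y))"

end

theory Submission
  imports Defs
begin

text \<open>Both obstructions are sums over i + j = k + 1 of expressions in the pair of 2-cochains
(mu i, om i), (mu j, om j). Each such term is multilinear and has the required symmetries on its
own, but the Leibniz and restriction rules hold for it only up to a defect G i j + G j i. Summing
over i + j = k + 1 lists every defect twice, so in characteristic 2 they cancel.\<close>

lemma (in vector_space) add_self_eq_zero_if_CHAR_2: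
  assumes "CHAR('a) = 2"
  shows "(x :: 'b) + x = 0"
proof -
  have "x + x = scale (1 + 1) x"
    by (simp only: scale_left_distrib scale_one)
  also have "(1 + 1 :: 'a) = of_nat CHAR('a)"
    using assms by simp
  finally show ?thesis
    by simp
qed

locale ring_vector_space = vector_space s for s :: "'k::field \<Rightarrow> 'a::comm_ring \<Rightarrow> 'a"
begin

context
  fixes \<phi> \<omega>
  assumes C2: "C2_PA s \<phi> \<omega>"
begin

lemma C2_PA_add_left: "\<phi> (x + y) z = \<phi> x z + \<phi> y z"
  using C2 unfolding C2_PA_def by (metis scale_one)

lemma C2_PA_add_right: "\<phi> z (x + y) = \<phi> z x + \<phi> z y"
  using C2 unfolding C2_PA_def by (metis scale_one)

lemma C2_PA_zero_left: "\<phi> 0 z = 0"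
  using C2_PA_add_left[of 0 0 z] by simp

lemma C2_PA_zero_right: "\<phi> z 0 = 0"
  using C2_PA_add_right[of z 0 0] by simp

lemma C2_PA_scale_left: "\<phi> (s c x) z = s c (\<phi> x z)"
  using C2 C2_PA_zero_left unfolding C2_PA_def by (metis add_0_right)

lemma C2_PA_scale_right: "\<phi> z (s c x) = s c (\<phi> z x)"
  using C2 C2_PA_zero_right unfolding C2_PA_def by (metis add_0_right)

lemma C2_PA_skew: "\<phi> y x = - \<phi> x y"
proof -
  have "\<phi> (x + y) (x + y) = 0" "\<phi> x x = 0" "\<phi> y y = 0"
    using C2 unfolding C2_PA_def by blast+
  then have "\<phi> y x + \<phi> x y = 0"
    by (simp add: C2_PA_add_left C2_PA_add_right)
  then show ?thesis
    by (simp add: eq_neg_iff_add_eq_0)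
qed

lemma C2_PA_mult_left: "\<phi> (a * b) c = a * \<phi> b c + b * \<phi> a c"
  using C2 unfolding C2_PA_def by blast

lemma C2_PA_mult_right: "\<phi> c (a * b) = a * \<phi> c b + b * \<phi> c a"
  using C2 unfolding C2_PA_def by blast

lemma C2_PA_sq_scale: "\<omega> (s c x) = s (c^2) (\<omega> x)"
  using C2 unfolding C2_PA_def by blast

lemma C2_PA_sq_add: "\<omega> (x + y) = \<omega> x + \<omega> y + \<phi> x y"
  using C2 unfolding C2_PA_def by blast

lemma C2_PA_sq_mult: "\<omega> (x * y) = x * x * \<omega> y + y * y * \<omega> x + x * y * \<phi> x y"
  using C2 unfolding C2_PA_def by blast

lemma C2_PA_alternating: "\<phi> x x = 0"
  using C2 unfolding C2_PA_def by blast

end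
end

definition jacobiator ::
  "('a::comm_ring \<Rightarrow> 'a \<Rightarrow> 'a) \<Rightarrow> ('a \<Rightarrow> 'a \<Rightarrow> 'a) \<Rightarrow> 'a \<Rightarrow> 'a \<Rightarrow> 'a \<Rightarrow> 'a" where
  "jacobiator \<phi> \<psi> x y z = \<phi> x (\<psi> y z) + \<phi> y (\<psi> z x) + \<phi> z (\<psi> x y)"

definition restricted_jacobiator ::
  "('a::comm_ring \<Rightarrow> 'a \<Rightarrow> 'a) \<Rightarrow> ('a \<Rightarrow> 'a \<Rightarrow> 'a) \<Rightarrow> ('a \<Rightarrow> 'a) \<Rightarrow> 'a \<Rightarrow> 'a \<Rightarrow> 'a" where
  "restricted_jacobiator \<phi> \<psi> \<beta> x y = \<phi> y (\<beta> x) + \<phi> x (\<psi> x y)"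

lemma obs1_eq_sum_jacobiator:
  "obs1 mu k x y z = (\<Sum>i\<in>{1..k}. jacobiator (mu i) (mu (k + 1 - i)) x y z)"
  by (simp add: obs1_def jacobiator_def)

lemma obs2_eq_sum_restricted_jacobiator:
  "obs2 mu om k x y
     = (\<Sum>i\<in>{1..k}. restricted_jacobiator (mu i) (mu (k + 1 - i)) (om (k + 1 - i)) x y)"
  by (simp add: obs2_def restricted_jacobiator_def)

lemma jacobiator_rotate: "jacobiator \<phi> \<psi> y z x = jacobiator \<phi> \<psi> x y z"
  by (simp add: jacobiator_def add_ac)

locale char2_vector_space = ring_vector_space s for s :: "'k::field \<Rightarrow> 'a::comm_ring \<Rightarrow> 'a" +
  assumes add_self: "(x :: 'a) + x = 0"
begin

lemma minus_self: "- x = (x :: 'a)"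
  using add_self by (rule minus_unique)

lemma C2_PA_commute:
  assumes "C2_PA s \<phi> \<omega>"
  shows "\<phi> y x = \<phi> x y"
  using C2_PA_skew[OF assms] by (simp add: minus_self)

lemma sum_reflect_pairs_eq_zero:
  fixes F :: "nat \<Rightarrow> nat \<Rightarrow> 'a"
  shows "(\<Sum>i\<in>{1..k}. F i (k + 1 - i) + F (k + 1 - i) i) = 0"
proof -
  have "(\<Sum>i\<in>{1..k}. F (k + 1 - i) i) = (\<Sum>i\<in>{1..k}. F (k + 1 - (k + 1 - i)) (k + 1 - i))"
    by (rule sum.atLeastAtMost_rev)
  also have "\<dots> = (\<Sum>i\<in>{1..k}. F i (k + 1 - i))"
    by (rule sum.cong) auto
  finally show ?thesis
    by (simp add: sum.distrib add_self)
qed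

context
  fixes \<phi> \<alpha> \<psi> \<beta>
  assumes \<phi>: "C2_PA s \<phi> \<alpha>" and \<psi>: "C2_PA s \<psi> \<beta>"
begin

lemmas cochain_pair_simps =
  C2_PA_add_left[OF \<phi>] C2_PA_add_right[OF \<phi>] C2_PA_scale_left[OF \<phi>] C2_PA_scale_right[OF \<phi>]
  C2_PA_mult_left[OF \<phi>] C2_PA_mult_right[OF \<phi>] C2_PA_alternating[OF \<phi>]
  C2_PA_zero_left[OF \<phi>] C2_PA_zero_right[OF \<phi>]
  C2_PA_add_left[OF \<psi>] C2_PA_add_right[OF \<psi>] C2_PA_scale_left[OF \<psi>] C2_PA_scale_right[OF \<psi>]
  C2_PA_mult_left[OF \<psi>] C2_PA_mult_right[OF \<psi>] C2_PA_alternating[OF \<psi>]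
  C2_PA_zero_left[OF \<psi>] C2_PA_zero_right[OF \<psi>]
  C2_PA_sq_scale[OF \<psi>] C2_PA_sq_add[OF \<psi>] C2_PA_sq_mult[OF \<psi>]

lemmas cochain_pair_commute = C2_PA_commute[OF \<phi>] C2_PA_commute[OF \<psi>]

lemma jacobiator_linear_left:
  "jacobiator \<phi> \<psi> (s c x + y) u v = s c (jacobiator \<phi> \<psi> x u v) + jacobiator \<phi> \<psi> y u v"
  unfolding jacobiator_def
  by (simp add: cochain_pair_simps scale_right_distrib add_ac)

lemma jacobiator_swap: "jacobiator \<phi> \<psi> y x z = jacobiator \<phi> \<psi> x y z"
  unfolding jacobiator_def by (simp add: cochain_pair_commute add_ac)

lemma jacobiator_alternating: "jacobiator \<phi> \<psi> x x y = 0"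
  unfolding jacobiator_def by (simp add: cochain_pair_commute cochain_pair_simps add_self)

lemma jacobiator_mult_left:
  "jacobiator \<phi> \<psi> (a * b) u v = a * jacobiator \<phi> \<psi> b u v + b * jacobiator \<phi> \<psi> a u v
     + ((\<psi> v b * \<phi> u a + \<psi> v a * \<phi> u b) + (\<phi> v b * \<psi> u a + \<phi> v a * \<psi> u b))"
  unfolding jacobiator_def
  by (simp add: cochain_pair_simps cochain_pair_commute algebra_simps)

lemma restricted_jacobiator_linear_right:
  "restricted_jacobiator \<phi> \<psi> \<beta> x (s c y + z)
     = s c (restricted_jacobiator \<phi> \<psi> \<beta> x y) + restricted_jacobiator \<phi> \<psi> \<beta> x z"
  unfolding restricted_jacobiator_def
  by (simp add: cochain_pair_simps scale_right_distrib add_ac)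

lemma restricted_jacobiator_scale_left:
  "restricted_jacobiator \<phi> \<psi> \<beta> (s c x) y = s (c^2) (restricted_jacobiator \<phi> \<psi> \<beta> x y)"
  unfolding restricted_jacobiator_def
  by (simp add: cochain_pair_simps scale_right_distrib power2_eq_square)

lemma restricted_jacobiator_add_left:
  "restricted_jacobiator \<phi> \<psi> \<beta> (x + y) z
     = restricted_jacobiator \<phi> \<psi> \<beta> x z + restricted_jacobiator \<phi> \<psi> \<beta> y z
     + jacobiator \<phi> \<psi> x y z"
  unfolding restricted_jacobiator_def jacobiator_def
  by (simp add: cochain_pair_simps cochain_pair_commute add_ac)

lemma restricted_jacobiator_mult_left:
  "restricted_jacobiator \<phi> \<psi> \<beta> (x * y) z = x * x * restricted_jacobiator \<phi> \<psi> \<beta> y z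
     + y * y * restricted_jacobiator \<phi> \<psi> \<beta> x z + x * y * jacobiator \<phi> \<psi> x y z
     + ((x * \<psi> x y * \<phi> z y + y * \<psi> x y * \<phi> z x)
        + (x * \<phi> x y * \<psi> z y + y * \<phi> x y * \<psi> z x))"
  unfolding restricted_jacobiator_def jacobiator_def
  by (simp add: cochain_pair_simps cochain_pair_commute algebra_simps add_self)

lemma restricted_jacobiator_mult_right:
  "restricted_jacobiator \<phi> \<psi> \<beta> x (z * z') = z * restricted_jacobiator \<phi> \<psi> \<beta> x z'
     + z' * restricted_jacobiator \<phi> \<psi> \<beta> x z + (\<psi> x z' * \<phi> x z + \<phi> x z' * \<psi> x z)"
  unfolding restricted_jacobiator_def
  by (simp add: cochain_pair_simps cochain_pair_commute algebra_simps)

end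

context
  fixes mu om and k :: nat
  assumes cochains: "\<And>i. i \<in> {1..k} \<Longrightarrow> C2_PA s (mu i) (om i)"
begin

lemma cochains_reflect: "i \<in> {1..k} \<Longrightarrow> C2_PA s (mu (k + 1 - i)) (om (k + 1 - i))"
  by (rule cochains) auto

lemma obs1_linear_left:
  "obs1 mu k (s c x + y) u v = s c (obs1 mu k x u v) + obs1 mu k y u v"
  unfolding obs1_eq_sum_jacobiator scale_sum_right sum.distrib[symmetric]
  by (intro sum.cong refl jacobiator_linear_left[OF cochains cochains_reflect])

lemma obs1_swap: "obs1 mu k y x z = obs1 mu k x y z"
  unfolding obs1_eq_sum_jacobiator
  by (intro sum.cong refl jacobiator_swap[OF cochains cochains_reflect])

lemma obs1_rotate: "obs1 mu k y z x = obs1 mu k x y z"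
  unfolding obs1_eq_sum_jacobiator by (simp only: jacobiator_rotate)

lemma obs1_alternating: "obs1 mu k x x y = 0"
  unfolding obs1_eq_sum_jacobiator
  by (intro sum.neutral ballI jacobiator_alternating[OF cochains cochains_reflect])

lemma obs1_mult_left: "obs1 mu k (a * b) u v = a * obs1 mu k b u v + b * obs1 mu k a u v"
proof -
  let ?J = "\<lambda>i. jacobiator (mu i) (mu (k + 1 - i))"
  let ?F = "\<lambda>i j. mu j v b * mu i u a + mu j v a * mu i u b"
  have "obs1 mu k (a * b) u v
      = (\<Sum>i\<in>{1..k}. a * ?J i b u v + b * ?J i a u v + (?F i (k + 1 - i) + ?F (k + 1 - i) i))"
    unfolding obs1_eq_sum_jacobiator
    by (intro sum.cong refl jacobiator_mult_left[OF cochains cochains_reflect])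
  also have "\<dots> = a * obs1 mu k b u v + b * obs1 mu k a u v
      + (\<Sum>i\<in>{1..k}. ?F i (k + 1 - i) + ?F (k + 1 - i) i)"
    by (simp only: obs1_eq_sum_jacobiator sum.distrib sum_distrib_left)
  finally show ?thesis
    by (simp only: sum_reflect_pairs_eq_zero[of ?F] add_0_right)
qed

lemma obs2_linear_right:
  "obs2 mu om k x (s c y + z) = s c (obs2 mu om k x y) + obs2 mu om k x z"
  unfolding obs2_eq_sum_restricted_jacobiator scale_sum_right sum.distrib[symmetric]
  by (intro sum.cong refl restricted_jacobiator_linear_right[OF cochains cochains_reflect])

lemma obs2_scale_left: "obs2 mu om k (s c x) y = s (c^2) (obs2 mu om k x y)"
  unfolding obs2_eq_sum_restricted_jacobiator scale_sum_right
  by (intro sum.cong refl restricted_jacobiator_scale_left[OF cochains cochains_reflect])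

lemma obs2_add_left:
  "obs2 mu om k (x + y) z = obs2 mu om k x z + obs2 mu om k y z + obs1 mu k x y z"
  unfolding obs2_eq_sum_restricted_jacobiator obs1_eq_sum_jacobiator sum.distrib[symmetric]
  by (intro sum.cong refl restricted_jacobiator_add_left[OF cochains cochains_reflect])

lemma obs2_mult_left:
  "obs2 mu om k (x * y) z = x * x * obs2 mu om k y z + y * y * obs2 mu om k x z + x * y * obs1 mu k x y z"
proof -
  let ?R = "\<lambda>i. restricted_jacobiator (mu i) (mu (k + 1 - i)) (om (k + 1 - i))"
  let ?J = "\<lambda>i. jacobiator (mu i) (mu (k + 1 - i))"
  let ?F = "\<lambda>i j. x * mu j x y * mu i z y + y * mu j x y * mu i z x"
  have "obs2 mu om k (x * y) z
      = (\<Sum>i\<in>{1..k}. x * x * ?R i y z + y * y * ?R i x z + x * y * ?J i x y z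
           + (?F i (k + 1 - i) + ?F (k + 1 - i) i))"
    unfolding obs2_eq_sum_restricted_jacobiator
    by (intro sum.cong refl restricted_jacobiator_mult_left[OF cochains cochains_reflect])
  also have "\<dots> = x * x * obs2 mu om k y z + y * y * obs2 mu om k x z + x * y * obs1 mu k x y z
      + (\<Sum>i\<in>{1..k}. ?F i (k + 1 - i) + ?F (k + 1 - i) i)"
    by (simp only: obs2_eq_sum_restricted_jacobiator obs1_eq_sum_jacobiator sum.distrib sum_distrib_left)
  finally show ?thesis
    by (simp only: sum_reflect_pairs_eq_zero[of ?F] add_0_right)
qed

lemma obs2_mult_right:
  "obs2 mu om k x (z * z') = z * obs2 mu om k x z' + z' * obs2 mu om k x z"
proof -
  let ?R = "\<lambda>i. restricted_jacobiator (mu i) (mu (k + 1 - i)) (om (k + 1 - i))"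
  let ?F = "\<lambda>i j. mu j x z' * mu i x z"
  have "obs2 mu om k x (z * z')
      = (\<Sum>i\<in>{1..k}. z * ?R i x z' + z' * ?R i x z + (?F i (k + 1 - i) + ?F (k + 1 - i) i))"
    unfolding obs2_eq_sum_restricted_jacobiator
    by (intro sum.cong refl restricted_jacobiator_mult_right[OF cochains cochains_reflect])
  also have "\<dots> = z * obs2 mu om k x z' + z' * obs2 mu om k x z
      + (\<Sum>i\<in>{1..k}. ?F i (k + 1 - i) + ?F (k + 1 - i) i)"
    by (simp only: obs2_eq_sum_restricted_jacobiator sum.distrib sum_distrib_left)
  finally show ?thesis
    by (simp only: sum_reflect_pairs_eq_zero[of ?F] add_0_right)
qed

lemma C3_PA_obstruction: "C3_PA s (obs1 mu k) (obs2 mu om k)"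
proof -
  have linear_mid: "obs1 mu k u (s c x + y) v = s c (obs1 mu k u x v) + obs1 mu k u y v"
    and linear_right: "obs1 mu k u v (s c x + y) = s c (obs1 mu k u v x) + obs1 mu k u v y"
    and alternating_outer: "obs1 mu k x y x = 0"
    and alternating_right: "obs1 mu k y x x = 0"
    and mult_mid: "obs1 mu k u (a * b) v = a * obs1 mu k u b v + b * obs1 mu k u a v"
    and mult_right: "obs1 mu k u v (a * b) = a * obs1 mu k u v b + b * obs1 mu k u v a"
    for u v c x y a b
    by (metis obs1_swap obs1_rotate obs1_linear_left obs1_alternating obs1_mult_left)+
  show ?thesis
    unfolding C3_PA_def
    by (intro conjI allI obs1_linear_left linear_mid linear_right obs1_alternating alternating_outer
        alternating_right obs1_mult_left mult_mid mult_right obs2_linear_right obs2_scale_left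
        obs2_add_left obs2_mult_left obs2_mult_right)
qed

end
end

theorem mainTheorem17:
  fixes s :: "'k::field \<Rightarrow> 'a::comm_ring \<Rightarrow> 'a"
    and br :: "'a \<Rightarrow> 'a \<Rightarrow> 'a" and sq :: "'a \<Rightarrow> 'a"
    and k :: nat and mu :: "nat \<Rightarrow> 'a \<Rightarrow> 'a \<Rightarrow> 'a" and om :: "nat \<Rightarrow> 'a \<Rightarrow> 'a"
  assumes "CHAR('k) = 2"
    and "restricted_poisson s br sq"
    and "k \<ge> 1"
    and "formal_deformation s br sq k mu om"
  shows "C3_PA s (obs1 mu k) (obs2 mu om k)"
proof -
  interpret vector_space s
    using assms(2) unfolding restricted_poisson_def comm_algebra_def by blast
  interpret char2_vector_space s
    by unfold_locales (rule add_self_eq_zero_if_CHAR_2[OF assms(1)])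
  show ?thesis
    by (rule C3_PA_obstruction) (use assms(4) in \<open>simp add: formal_deformation_def\<close>)
qed

end
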